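(* Let $k\ge 3$ be odd and let $G$ be an odd unicycle graph of girth $k$ with $n=|V(G)|$, whose unique cycle has vertices $u,u_1,\dots,u_{k-1}$ with $\deg u=4$ and $\deg u_i=2$ for $1\le i\le k-1$. Let $F$ be the set of edges of $G$ having no endpoint on the cycle. Let $\det(xI-T)=\sum_{j=0}^n\rho_j x^j$ be the characteristic polynomial of the transition matrix $T$ of $G$. Let $t$ be an integer with $1\le t\le (k-1)/2$. If $2^{k+2t}\rho_{n-k-2t}\in\mathbb{Z}$, then $$2^{2t}\sum_{\{e_1,\dots,e_t\}}\prod_{l=1}^t M(e_l)\in\mathbb{Z},$$ where the sum runs over all $t$-matchings $\{e_1,\dots,e_t\}\subseteq F$.
   Context: Graphs are simple, connected and finite. An odd unicycle graph is a non-bipartite graph with $|V|=|E|$, i.e. a connected graph with exactly one cycle, of odd length (its girth). The transition matrix $T$ on $\mathbb{C}^V$ has entries $T_{a,b}=1/\deg a$ if $a\sim b$ and $0$ otherwise. A $t$-matching is a set of $t$ pairwise disjoint edges. For an edge $e=ab$, $M(e)=\frac{1}{\deg a}\cdot\frac{1}{\deg b}$ (degrees in $G$). *)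

theory Defs
  imports Complex_Main "Jordan_Normal_Form.Char_Poly"
begin

definition simple_graph :: "nat \<Rightarrow> (nat \<Rightarrow> nat \<Rightarrow> bool) \<Rightarrow> bool" where
  "simple_graph n E \<longleftrightarrow> (\<forall>a b. E a b \<longrightarrow> a < n \<and> b < n) \<and> (\<forall>a b. E a b \<longrightarrow> E b a) \<and> (\<forall>a. \<not> E a a)"

definition connected_graph :: "nat \<Rightarrow> (nat \<Rightarrow> nat \<Rightarrow> bool) \<Rightarrow> bool" where
  "connected_graph n E \<longleftrightarrow> 0 < n \<and> (\<forall>a<n. \<forall>b<n. (a, b) \<in> {(x, y). E x y}\<^sup>*)"

definition edges :: "(nat \<Rightarrow> nat \<Rightarrow> bool) \<Rightarrow> nat set set" where
  "edges E = {{a, b} | a b. E a b}"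

definition deg :: "(nat \<Rightarrow> nat \<Rightarrow> bool) \<Rightarrow> nat \<Rightarrow> nat" where
  "deg E a = card {b. E a b}"

definition bipartite :: "nat \<Rightarrow> (nat \<Rightarrow> nat \<Rightarrow> bool) \<Rightarrow> bool" where
  "bipartite n E \<longleftrightarrow> (\<exists>A. \<forall>a b. E a b \<longrightarrow> (a \<in> A \<longleftrightarrow> b \<notin> A))"

definition odd_unicycle :: "nat \<Rightarrow> (nat \<Rightarrow> nat \<Rightarrow> bool) \<Rightarrow> bool" where
  "odd_unicycle n E \<longleftrightarrow> simple_graph n E \<and> connected_graph n E \<and> card (edges E) = n \<and> \<not> bipartite n E"

definition is_cycle :: "(nat \<Rightarrow> nat \<Rightarrow> bool) \<Rightarrow> nat \<Rightarrow> (nat \<Rightarrow> nat) \<Rightarrow> bool" where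
  "is_cycle E k c \<longleftrightarrow> 3 \<le> k \<and> inj_on c {..<k} \<and> (\<forall>i<k. E (c i) (c (Suc i mod k)))"

definition girth :: "(nat \<Rightarrow> nat \<Rightarrow> bool) \<Rightarrow> nat" where
  "girth E = (LEAST k. \<exists>c. is_cycle E k c)"

definition transition_matrix :: "nat \<Rightarrow> (nat \<Rightarrow> nat \<Rightarrow> bool) \<Rightarrow> real mat" where
  "transition_matrix n E = mat n n (\<lambda>(a, b). if E a b then 1 / real (deg E a) else 0)"

text \<open>M(e) = 1/(deg a * deg b) for e = {a,b}.\<close>
definition Mw :: "(nat \<Rightarrow> nat \<Rightarrow> bool) \<Rightarrow> nat set \<Rightarrow> real" where
  "Mw E e = (\<Prod>x\<in>e. 1 / real (deg E x))"

definition matchings :: "nat set set \<Rightarrow> nat \<Rightarrow> nat set set set" where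
  "matchings F t = {S. S \<subseteq> F \<and> card S = t \<and> (\<forall>e\<in>S. \<forall>e'\<in>S. e \<noteq> e' \<longrightarrow> e \<inter> e' = {})}"

end

theory Submission
  imports Defs "HOL-Combinatorics.Cycles"
begin

text \<open>Expanding det(xI - T) over permutations, and using that T has zero diagonal, the
  coefficient of x^(n-r) is (-1)^r times the sum, over the permutations that move exactly r
  vertices and each of them to a neighbour, of sign p times the product of 1/deg over the moved
  vertices. In a unicyclic graph an orbit of length at least three must use every edge of the
  cycle: otherwise deleting a cycle edge it avoids and one edge of the orbit would leave a
  connected graph on n vertices with n - 2 edges. As the cycle vertices other than c 0 have
  degree 2, such an orbit is the rotation of the cycle in one of its two directions. So for odd
  r = k + 2t the permutation rotates the cycle and swaps the ends of a t-matching avoiding it;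
  every t-matching arises from exactly two permutations, each with sign (-1)^t and weight
  2^(-k-1) times the product of the M(e). Hence 2^(k+2t) rho = (-1)^(t+1) 2^(2t) times the
  matching sum.\<close>

section \<open>Matchings as involutions\<close>

definition matching :: "'a set set \<Rightarrow> bool" where
  "matching S \<longleftrightarrow> (\<forall>e\<in>S. card e = 2) \<and> pairwise disjnt S"

definition matching_perm :: "'a set set \<Rightarrow> 'a \<Rightarrow> 'a" where
  "matching_perm S x = (if x \<in> \<Union>S then THE y. {x, y} \<in> S \<and> y \<noteq> x else x)"

lemma matching_subset: "matching S \<Longrightarrow> S' \<subseteq> S \<Longrightarrow> matching S'"
  unfolding matching_def by (meson pairwise_subset subsetD)

lemma matching_edge_eq:
  assumes "matching S" "e \<in> S" "e' \<in> S" "x \<in> e" "x \<in> e'"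
  shows "e = e'"
  using assms unfolding matching_def pairwise_def disjnt_def by blast

lemma matching_perm_eq:
  assumes S: "matching S" and "{x, y} \<in> S" "x \<noteq> y"
  shows "matching_perm S x = y"
proof -
  have "(THE y. {x, y} \<in> S \<and> y \<noteq> x) = y"
  proof (rule the_equality)
    fix y' assume y': "{x, y'} \<in> S \<and> y' \<noteq> x"
    then have "{x, y'} = {x, y}" using matching_edge_eq[OF S] assms(2) by blast
    then show "y' = y" using y' by (auto simp: doubleton_eq_iff)
  qed (use assms in auto)
  then show ?thesis using assms(2) by (auto simp: matching_perm_def)
qed

lemma matching_perm_outside: "x \<notin> \<Union>S \<Longrightarrow> matching_perm S x = x"
  by (simp add: matching_perm_def)

lemma matching_perm_edge:
  assumes S: "matching S" and x: "x \<in> \<Union>S"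
  shows "{x, matching_perm S x} \<in> S" and "matching_perm S x \<noteq> x"
proof -
  obtain e where e: "e \<in> S" "x \<in> e" using x by blast
  then obtain y where "e = {x, y}" "y \<noteq> x"
    using S by (auto simp: matching_def card_2_iff doubleton_eq_iff)
  with e matching_perm_eq[OF S, of x y] show "{x, matching_perm S x} \<in> S" "matching_perm S x \<noteq> x"
    by auto
qed

lemma matching_perm_insert:
  assumes S: "matching (insert {a, b} S)" and "{a, b} \<notin> S" "a \<noteq> b"
  shows "matching_perm (insert {a, b} S) = transpose a b \<circ> matching_perm S"
proof
  fix x
  have S': "matching S" using S matching_subset by blast
  have disjoint: "{a, b} \<inter> \<Union>S = {}"
  proof (rule ccontr)
    assume "{a, b} \<inter> \<Union>S \<noteq> {}"
    then obtain z e where "e \<in> S" "z \<in> e" "z \<in> {a, b}" by blast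
    then have "{a, b} = e" using matching_edge_eq[OF S, of "{a, b}" e z] by blast
    with \<open>e \<in> S\<close> \<open>{a, b} \<notin> S\<close> show False by simp
  qed
  show "matching_perm (insert {a, b} S) x = (transpose a b \<circ> matching_perm S) x"
  proof (cases "x \<in> \<Union>S")
    case True
    note edge = matching_perm_edge[OF S' True]
    then have "matching_perm S x \<notin> {a, b}" using disjoint by blast
    moreover have "matching_perm (insert {a, b} S) x = matching_perm S x"
      using edge by (intro matching_perm_eq[OF S]) auto
    ultimately show ?thesis by simp
  next
    case False
    then have fixed: "matching_perm S x = x" by (rule matching_perm_outside)
    consider "x = a" | "x = b" | "x \<notin> {a, b}" by blast
    then show ?thesis
    proof cases
      case 1
      then show ?thesis using matching_perm_eq[OF S, of a b] \<open>a \<noteq> b\<close> fixed by simp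
    next
      case 2
      then show ?thesis using matching_perm_eq[OF S, of b a] \<open>a \<noteq> b\<close> fixed by (simp add: insert_commute)
    next
      case 3
      then have "x \<notin> \<Union>(insert {a, b} S)" using False by simp
      then show ?thesis using 3 fixed by (simp add: matching_perm_outside)
    qed
  qed
qed

lemma matching_perm_permutes_sign:
  assumes "finite S" "matching S"
  shows "matching_perm S permutes \<Union>S \<and> sign (matching_perm S) = (-1) ^ card S"
  using assms
proof (induction S rule: finite_induct)
  case empty
  have "matching_perm {} = id" by (auto simp: matching_perm_def)
  then show ?case by (metis permutes_id sign_id Union_empty card.empty power_0)
next
  case (insert e S)
  obtain a b where e: "e = {a, b}" "a \<noteq> b"
    using insert.prems by (auto simp: matching_def card_2_iff)
  have IH: "matching_perm S permutes \<Union>S" "sign (matching_perm S) = (-1) ^ card S"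
    using insert.IH insert.prems matching_subset by blast+
  have eq: "matching_perm (insert e S) = transpose a b \<circ> matching_perm S"
    using matching_perm_insert[of a b S] insert e by simp
  have swap: "transpose a b permutes \<Union>(insert e S)" using e by (intro permutes_swap_id) auto
  have rest: "matching_perm S permutes \<Union>(insert e S)" using IH(1) by (rule permutes_subset) auto
  have "finite (\<Union>(insert e S))"
    using insert.hyps insert.prems by (auto simp: matching_def card_2_iff)
  then have "sign (transpose a b \<circ> matching_perm S) = sign (transpose a b) * sign (matching_perm S)"
    using swap rest by (intro sign_compose) (auto intro: permutes_imp_permutation)
  then have "sign (matching_perm (insert e S)) = (-1) ^ card (insert e S)"
    unfolding eq using IH(2) e insert.hyps by (simp add: sign_swap_id)
  moreover have "matching_perm (insert e S) permutes \<Union>(insert e S)"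
    unfolding eq by (rule permutes_compose[OF rest swap])
  ultimately show ?case by simp
qed

lemma card_Union_matching:
  assumes "finite S" "matching S"
  shows "card (\<Union>S) = 2 * card S"
proof -
  have "card (\<Union>S) = (\<Sum>e\<in>S. card e)"
    using assms by (intro card_Union_disjoint) (auto simp: matching_def card_2_iff)
  then show ?thesis using assms by (simp add: matching_def)
qed

lemma matching_of_involution:
  assumes q: "\<forall>x\<in>A. q x \<in> A \<and> q x \<noteq> x \<and> q (q x) = x"
  shows "matching ((\<lambda>x. {x, q x}) ` A)" and "\<Union>((\<lambda>x. {x, q x}) ` A) = A"
proof -
  have pair_eq: "{x, q x} = {z, q z}" if "x \<in> A" "z \<in> {x, q x}" for x z
    using q that by auto
  show "matching ((\<lambda>x. {x, q x}) ` A)"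
    unfolding matching_def pairwise_def disjnt_def
  proof (intro conjI ballI impI)
    fix e assume "e \<in> (\<lambda>x. {x, q x}) ` A"
    then show "card e = 2" using q by auto
  next
    fix e e' assume "e \<in> (\<lambda>x. {x, q x}) ` A" "e' \<in> (\<lambda>x. {x, q x}) ` A" "e \<noteq> e'"
    then show "e \<inter> e' = {}" using pair_eq by blast
  qed
  show "\<Union>((\<lambda>x. {x, q x}) ` A) = A" using q by blast
qed

lemma matching_perm_of_involution:
  assumes q: "\<forall>x\<in>A. q x \<in> A \<and> q x \<noteq> x \<and> q (q x) = x" and "x \<in> A"
  shows "matching_perm ((\<lambda>x. {x, q x}) ` A) x = q x"
  using assms matching_perm_eq[OF matching_of_involution(1)[OF q], of x "q x"] by auto

lemma even_card_involution:
  assumes "finite A" "\<forall>x\<in>A. q x \<in> A \<and> q x \<noteq> x \<and> q (q x) = x"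
  shows "even (card A)"
proof -
  have "finite ((\<lambda>x. {x, q x}) ` A)" using assms(1) by simp
  then show ?thesis
    using card_Union_matching matching_of_involution[OF assms(2)] by (metis dvd_triv_left)
qed

lemma odd_card_moved_imp_not_involution:
  assumes "finite {x. p x \<noteq> x}" and "odd (card {x. p x \<noteq> x})"
  obtains x where "p (p x) \<noteq> x"
proof (rule ccontr)
  assume "\<not> thesis"
  then have "p (p x) = x" for x using that by blast
  then have "\<forall>y\<in>{x. p x \<noteq> x}. p y \<in> {x. p x \<noteq> x} \<and> p y \<noteq> y \<and> p (p y) = y" by auto
  with assms show False using even_card_involution by blast
qed

section \<open>Graphs\<close>

definition graph_perm :: "nat \<Rightarrow> (nat \<Rightarrow> nat \<Rightarrow> bool) \<Rightarrow> (nat \<Rightarrow> nat) \<Rightarrow> bool" where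
  "graph_perm n E p \<longleftrightarrow> p permutes {0..<n} \<and> (\<forall>i. p i \<noteq> i \<longrightarrow> E i (p i))"

definition delete_edge :: "('a \<Rightarrow> 'a \<Rightarrow> bool) \<Rightarrow> 'a \<Rightarrow> 'a \<Rightarrow> 'a \<Rightarrow> 'a \<Rightarrow> bool" where
  "delete_edge E a b u v \<longleftrightarrow> E u v \<and> {u, v} \<noteq> {a, b}"

lemma finite_edges: "simple_graph n E \<Longrightarrow> finite (edges E)"
  by (rule finite_subset[of _ "Pow {0..<n}"]) (auto simp: simple_graph_def edges_def)

lemma edgesI: "E a b \<Longrightarrow> {a, b} \<in> edges E"
  unfolding edges_def by blast

lemma card_edge:
  assumes "simple_graph n E" "e \<in> edges E"
  shows "card e = 2"
proof -
  obtain a b where "e = {a, b}" "E a b" using assms(2) by (auto simp: edges_def)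
  moreover have "a \<noteq> b" using calculation(2) assms(1) by (auto simp: simple_graph_def)
  ultimately show ?thesis by simp
qed

lemma simple_graph_delete_edge: "simple_graph n E \<Longrightarrow> simple_graph n (delete_edge E a b)"
  by (auto simp: simple_graph_def delete_edge_def insert_commute)

lemma edges_delete_edge: "edges (delete_edge E a b) = edges E - {{a, b}}"
  by (auto simp: edges_def delete_edge_def)

lemma connected_graph_delete_edge:
  assumes G: "simple_graph n E" "connected_graph n E"
    and path: "(a, b) \<in> {(u, v). delete_edge E a b u v}\<^sup>*"
  shows "connected_graph n (delete_edge E a b)"
proof -
  let ?D = "{(u, v). delete_edge E a b u v}"
  have "delete_edge E a b v u" if "delete_edge E a b u v" for u v
    using that G(1) unfolding delete_edge_def simple_graph_def by (metis insert_commute)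
  then have "sym ?D" by (auto intro: symI)
  then have path_back: "(b, a) \<in> ?D\<^sup>*" by (rule symD[OF sym_rtrancl path])
  have "(u, v) \<in> ?D\<^sup>*" if "E u v" for u v
  proof (cases "{u, v} = {a, b}")
    case True
    then have "(u, v) = (a, b) \<or> (u, v) = (b, a)" by (auto simp: doubleton_eq_iff)
    then show ?thesis using path path_back by blast
  next
    case False
    then have "(u, v) \<in> ?D" using that by (simp add: delete_edge_def)
    then show ?thesis by (rule r_into_rtrancl)
  qed
  then have "{(u, v). E u v}\<^sup>* \<subseteq> ?D\<^sup>*" by (intro rtrancl_subset_rtrancl) blast
  then show ?thesis using G(2) unfolding connected_graph_def by blast
qed

text \<open>Sending each vertex other than 0 to a neighbour closer to 0 gives n - 1 distinct edges.\<close>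
lemma card_edges_connected_graph:
  assumes G: "simple_graph n E" "connected_graph n E"
  shows "n - 1 \<le> card (edges E)"
proof -
  let ?r = "{(x, y). E x y}"
  define dist where "dist v = (LEAST m. (v, 0) \<in> ?r ^^ m)" for v
  have closer: "\<exists>w. E v w \<and> dist w < dist v" if v: "0 < v" "v < n" for v
  proof -
    have "(v, 0) \<in> ?r\<^sup>*" using G(2) v by (auto simp: connected_graph_def)
    then obtain m where "(v, 0) \<in> ?r ^^ m" using rtrancl_power by blast
    then have d: "(v, 0) \<in> ?r ^^ dist v" unfolding dist_def by (rule LeastI)
    then obtain m' where m': "dist v = Suc m'" using v by (cases "dist v") auto
    with d obtain w where "(v, w) \<in> ?r" "(w, 0) \<in> ?r ^^ m'" by (metis relpow_Suc_D2)
    moreover from this(2) have "dist w \<le> m'" unfolding dist_def by (rule Least_le)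
    ultimately show ?thesis using m' by auto
  qed
  define parent where "parent v = (SOME w. E v w \<and> dist w < dist v)" for v
  have parent: "E v (parent v) \<and> dist (parent v) < dist v" if "0 < v" "v < n" for v
    unfolding parent_def using someI_ex[OF closer[OF that]] .
  have inj: "inj_on (\<lambda>v. {v, parent v}) {1..<n}"
  proof
    fix v w assume v: "v \<in> {1..<n}" and w: "w \<in> {1..<n}" and e: "{v, parent v} = {w, parent w}"
    show "v = w"
    proof (rule ccontr)
      assume "v \<noteq> w"
      then have "v = parent w" "w = parent v" using e by (auto simp: doubleton_eq_iff)
      then show False using parent[of v] parent[of w] v w by auto
    qed
  qed
  have "{v, parent v} \<in> edges E" if "v \<in> {1..<n}" for v
    using parent[of v] that by (auto intro: edgesI)
  then have "(\<lambda>v. {v, parent v}) ` {1..<n} \<subseteq> edges E" by blast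
  with inj have "card {1..<n} \<le> card (edges E)"
    by (rule card_inj_on_le[OF _ _ finite_edges[OF G(1)]])
  then show ?thesis by simp
qed

lemma delete_edge_disconnects:
  assumes G: "simple_graph n E" "connected_graph n E" and "card (edges E) < n" and "E a b"
  shows "(a, b) \<notin> {(u, v). delete_edge E a b u v}\<^sup>*"
proof
  assume "(a, b) \<in> {(u, v). delete_edge E a b u v}\<^sup>*"
  then have "connected_graph n (delete_edge E a b)" by (rule connected_graph_delete_edge[OF G])
  then have "n - 1 \<le> card (edges (delete_edge E a b))"
    by (rule card_edges_connected_graph[OF simple_graph_delete_edge[OF G(1)]])
  then have "n - 1 \<le> card (edges E - {{a, b}})" by (simp only: edges_delete_edge)
  moreover have ab: "{a, b} \<in> edges E" using \<open>E a b\<close> by (rule edgesI)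
  then have "0 < card (edges E)" using finite_edges[OF G(1)] card_gt_0_iff by blast
  ultimately show False
    using \<open>card (edges E) < n\<close> ab finite_edges[OF G(1)] by (simp add: card_Diff_singleton)
qed

lemma orbit_rtrancl_delete_edge:
  fixes p :: "'a \<Rightarrow> 'a"
  assumes p: "permutation p" and x: "p (p x) \<noteq> x"
    and orbit: "\<And>j. G ((p ^^ j) x) ((p ^^ Suc j) x)"
  shows "(p x, x) \<in> {(u, v). delete_edge G (p x) x u v}\<^sup>*"
proof -
  let ?D = "{(u, v). delete_edge G (p x) x u v}"
  define m where "m = least_power p x"
  have m: "(p ^^ m) x = x" "0 < m" using least_power_of_permutation[OF p] by (auto simp: m_def)
  have "(p x, (p ^^ j) x) \<in> ?D\<^sup>*" if "1 \<le> j" "j \<le> m" for j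
    using that
  proof (induction j)
    case (Suc j)
    show ?case
    proof (cases "j = 0")
      case False
      have "(p ^^ j) x \<noteq> x"
        using least_power_le[of j p x] False Suc.prems by (auto simp: m_def)
      moreover have "(p ^^ j) x = p x \<Longrightarrow> (p ^^ Suc j) x \<noteq> x" using x by simp
      ultimately have "((p ^^ j) x, (p ^^ Suc j) x) \<in> ?D"
        using orbit[of j] by (auto simp: delete_edge_def doubleton_eq_iff)
      moreover have "(p x, (p ^^ j) x) \<in> ?D\<^sup>*" using Suc False by simp
      ultimately show ?thesis by (rule rtrancl_into_rtrancl[rotated])
    qed simp
  qed simp
  from this[of m] m show ?thesis by simp
qed

lemma funpow_orbit_moved:
  assumes "inj p" "(p ^^ m) x \<noteq> x"
  shows "(p ^^ m) ((p ^^ j) x) \<noteq> (p ^^ j) x"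
proof
  assume "(p ^^ m) ((p ^^ j) x) = (p ^^ j) x"
  then have "(p ^^ j) ((p ^^ m) x) = (p ^^ j) x"
    by (metis add.commute comp_apply funpow_add)
  moreover have "inj (p ^^ j)" using inj_fn[OF assms(1)] .
  ultimately show False using assms(2) by (simp add: inj_eq)
qed

lemma graph_perm_inv:
  assumes G: "simple_graph n E" and p: "graph_perm n E p"
  shows "graph_perm n E (inv_into UNIV p)" and "{x. inv_into UNIV p x \<noteq> x} = {x. p x \<noteq> x}"
proof -
  have perm: "p permutes {0..<n}" using p by (simp add: graph_perm_def)
  have fixed_iff: "inv_into UNIV p x = x \<longleftrightarrow> p x = x" for x using permutes_inv_eq[OF perm] by blast
  then show "{x. inv_into UNIV p x \<noteq> x} = {x. p x \<noteq> x}" by blast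
  have "E x (inv_into UNIV p x)" if "inv_into UNIV p x \<noteq> x" for x
  proof -
    have "p (inv_into UNIV p x) = x" using permutes_inverses(1)[OF perm] .
    moreover have "p (inv_into UNIV p x) \<noteq> inv_into UNIV p x" using that calculation by simp
    ultimately show ?thesis using p G by (metis graph_perm_def simple_graph_def)
  qed
  then show "graph_perm n E (inv_into UNIV p)" using permutes_inv[OF perm] by (simp add: graph_perm_def)
qed

locale unicyclic_graph =
  fixes n :: nat and E :: "nat \<Rightarrow> nat \<Rightarrow> bool"
  assumes simple: "simple_graph n E" and connected: "connected_graph n E"
    and card_edges: "card (edges E) = n"
begin

lemma card_edges_delete_edge: "E a b \<Longrightarrow> card (edges (delete_edge E a b)) < n"
proof -
  assume "E a b"
  then have "card (edges (delete_edge E a b)) = n - 1"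
    using card_edges finite_edges[OF simple] edgesI
    by (simp add: edges_delete_edge card_Diff_singleton)
  moreover have "0 < n" using connected by (simp add: connected_graph_def)
  ultimately show ?thesis by simp
qed

lemma graph_perm_orbit_crosses_cycle_edge:
  assumes ab: "E a b" "(a, b) \<in> {(u, v). delete_edge E a b u v}\<^sup>*"
    and p: "graph_perm n E p" and x: "p (p x) \<noteq> x"
  obtains j where "{(p ^^ j) x, (p ^^ Suc j) x} = {a, b}"
proof -
  let ?G = "delete_edge E a b"
  have "\<exists>j. {(p ^^ j) x, (p ^^ Suc j) x} = {a, b}"
  proof (rule ccontr)
    assume avoid: "\<nexists>j. {(p ^^ j) x, (p ^^ Suc j) x} = {a, b}"
    have G: "simple_graph n ?G" "connected_graph n ?G"
      using simple_graph_delete_edge connected_graph_delete_edge simple connected ab(2) by blast+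
    have perm: "p permutes {0..<n}" and step: "\<forall>i. p i \<noteq> i \<longrightarrow> E i (p i)"
      using p by (auto simp: graph_perm_def)
    have "p x \<noteq> x" using x by auto
    then have "p ((p ^^ j) x) \<noteq> (p ^^ j) x" for j
      using funpow_orbit_moved[OF permutes_inj[OF perm], of 1 x j] by simp
    then have orbit: "?G ((p ^^ j) x) ((p ^^ Suc j) x)" for j
      using step avoid by (auto simp: delete_edge_def)
    have "(p x, x) \<in> {(u, v). delete_edge ?G (p x) x u v}\<^sup>*"
      using perm x orbit by (intro orbit_rtrancl_delete_edge) (auto intro: permutes_imp_permutation)
    moreover have "?G (p x) x"
      using orbit[of 0] simple by (auto simp: delete_edge_def simple_graph_def insert_commute)
    ultimately show False
      using delete_edge_disconnects[OF G card_edges_delete_edge[OF ab(1)]] by blast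
  qed
  then show thesis using that by blast
qed

end

section \<open>Characteristic polynomial of a zero-diagonal matrix\<close>

lemma prod_monom:
  "finite I \<Longrightarrow> (\<Prod>i\<in>I. monom (a i) (e i)) = monom (\<Prod>i\<in>I. a i) (\<Sum>i\<in>I. e i)"
  by (induction I rule: finite_induct) (auto simp: mult_monom)

lemma card_moved_add_card_fixed:
  assumes "p permutes {0..<n}"
  shows "card {i. p i \<noteq> i} + card {i. i < n \<and> p i = i} = n"
proof -
  have "{i. p i \<noteq> i} = {i. i < n \<and> p i \<noteq> i}"
    using permutes_not_in[OF assms] by fastforce
  moreover have "card {i. i < n \<and> p i \<noteq> i} + card {i. i < n \<and> p i = i} = card {0..<n}"
  proof -
    have "{i. i < n \<and> p i \<noteq> i} \<union> {i. i < n \<and> p i = i} = {0..<n}" by auto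
    then show ?thesis by (subst card_Un_disjoint[symmetric]) auto
  qed
  ultimately show ?thesis by simp
qed

lemma coeff_char_poly_zero_diagonal:
  fixes A :: "'a :: comm_ring_1 mat"
  assumes A: "A \<in> carrier_mat n n" and diag: "\<forall>i<n. A $$ (i, i) = 0" and "r \<le> n"
  shows "coeff (char_poly A) (n - r) =
    (\<Sum>p | p permutes {0..<n} \<and> card {i. p i \<noteq> i} = r. of_int (sign p) * (\<Prod>i | p i \<noteq> i. - A $$ (i, p i)))"
proof -
  define summand where "summand p = of_int (sign p) * (\<Prod>i | p i \<noteq> i. - A $$ (i, p i))" for p
  have diagonal_product: "(\<Prod>i = 0..<n. char_poly_matrix A $$ (i, p i)) =
      monom (\<Prod>i | p i \<noteq> i. - A $$ (i, p i)) (card {i. i < n \<and> p i = i})"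
    if p: "p permutes {0..<n}" for p
  proof -
    have moved: "{i. p i \<noteq> i} = {i \<in> {0..<n}. p i \<noteq> i}"
      using permutes_not_in[OF p] by fastforce
    have "(\<Prod>i = 0..<n. char_poly_matrix A $$ (i, p i)) =
        (\<Prod>i = 0..<n. monom (if p i = i then 1 else - A $$ (i, p i)) (if p i = i then 1 else 0))"
      using A diag permutes_in_image[OF p]
      by (intro prod.cong) (auto simp: char_poly_matrix_def monom_0 monom_Suc one_pCons)
    also have "\<dots> = monom (\<Prod>i | p i \<noteq> i. - A $$ (i, p i)) (card {i. i < n \<and> p i = i})"
      by (simp add: prod_monom prod.If_cases sum.If_cases moved Int_def)
    finally show ?thesis .
  qed
  have char_poly: "char_poly A = (\<Sum>p | p permutes {0..<n}. monom (summand p) (card {i. i < n \<and> p i = i}))"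
  proof -
    have "char_poly_matrix A \<in> carrier_mat n n" using A by simp
    then show ?thesis using diagonal_product
      by (auto simp: char_poly_def det_def summand_def of_int_poly monom_0[symmetric] mult_monom intro!: sum.cong)
  qed
  have fixed_iff_moved: "card {i. i < n \<and> p i = i} = n - r \<longleftrightarrow> card {i. p i \<noteq> i} = r"
    if "p permutes {0..<n}" for p
    using card_moved_add_card_fixed[OF that] \<open>r \<le> n\<close> by arith
  have "coeff (char_poly A) (n - r) =
      (\<Sum>p | p permutes {0..<n}. if card {i. p i \<noteq> i} = r then summand p else 0)"
    unfolding char_poly using fixed_iff_moved by (auto simp: coeff_sum intro!: sum.cong)
  also have "\<dots> = (\<Sum>p | p permutes {0..<n} \<and> card {i. p i \<noteq> i} = r. summand p)"
    by (simp add: sum.inter_filter[symmetric] finite_permutations conj_commute)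
  finally show ?thesis unfolding summand_def .
qed

lemma transition_matrix_entry:
  "i < n \<Longrightarrow> j < n \<Longrightarrow> transition_matrix n E $$ (i, j) = (if E i j then 1 / real (deg E i) else 0)"
  by (simp add: transition_matrix_def)

lemma moved_weight_transition_matrix:
  assumes G: "simple_graph n E" and p: "p permutes {0..<n}"
  shows "(\<Prod>i | p i \<noteq> i. - transition_matrix n E $$ (i, p i)) =
    (if graph_perm n E p then (-1) ^ card {i. p i \<noteq> i} * (\<Prod>i | p i \<noteq> i. 1 / real (deg E i))
     else 0)"
proof (cases "graph_perm n E p")
  case True
  have "(\<Prod>i | p i \<noteq> i. - transition_matrix n E $$ (i, p i)) = (\<Prod>i | p i \<noteq> i. - (1 / real (deg E i)))"
  proof (rule prod.cong[OF refl])
    fix i assume "i \<in> {i. p i \<noteq> i}"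
    then have "E i (p i)" using True by (simp add: graph_perm_def)
    moreover from this have "i < n" "p i < n" using G by (auto simp: simple_graph_def)
    ultimately show "- transition_matrix n E $$ (i, p i) = - (1 / real (deg E i))"
      by (simp add: transition_matrix_entry)
  qed
  then show ?thesis using True by (simp add: prod_uminus)
next
  case False
  then obtain i where i: "p i \<noteq> i" "\<not> E i (p i)" using p by (auto simp: graph_perm_def)
  have moved: "{i. p i \<noteq> i} \<subseteq> {0..<n}" using p by (simp add: permutes_altdef)
  then have "i < n" "p i < n" using i permutes_in_image[OF p] by auto
  then have "- transition_matrix n E $$ (i, p i) = 0" using i by (simp add: transition_matrix_entry)
  moreover have "finite {i. p i \<noteq> i}" using moved finite_subset by blast
  ultimately have "(\<Prod>i | p i \<noteq> i. - transition_matrix n E $$ (i, p i)) = 0"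
    using i by (intro prod_zero) auto
  then show ?thesis using False by simp
qed

lemma coeff_char_poly_transition_matrix:
  assumes G: "simple_graph n E" and "r \<le> n"
  shows "coeff (char_poly (transition_matrix n E)) (n - r) = (-1) ^ r *
    (\<Sum>p | graph_perm n E p \<and> card {i. p i \<noteq> i} = r.
      of_int (sign p) * (\<Prod>i | p i \<noteq> i. 1 / real (deg E i)))"
proof -
  let ?P = "{p. p permutes {0..<n} \<and> card {i. p i \<noteq> i} = r}"
  let ?w = "\<lambda>p. of_int (sign p) * ((-1) ^ r * (\<Prod>i | p i \<noteq> i. 1 / real (deg E i)))"
  have "\<forall>i<n. transition_matrix n E $$ (i, i) = 0"
    using G by (simp add: transition_matrix_entry simple_graph_def)
  then have "coeff (char_poly (transition_matrix n E)) (n - r) =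
      (\<Sum>p\<in>?P. of_int (sign p) * (\<Prod>i | p i \<noteq> i. - transition_matrix n E $$ (i, p i)))"
    by (intro coeff_char_poly_zero_diagonal \<open>r \<le> n\<close>) (simp add: transition_matrix_def)
  also have "\<dots> = (\<Sum>p\<in>?P. if graph_perm n E p then ?w p else 0)"
    by (intro sum.cong refl) (simp add: moved_weight_transition_matrix[OF G])
  also have "\<dots> = (\<Sum>p\<in>{p \<in> ?P. graph_perm n E p}. ?w p)"
    by (rule sum.inter_filter[symmetric]) (rule finite_subset[OF _ finite_permutations[of "{0..<n}"]], auto)
  also have "{p \<in> ?P. graph_perm n E p} = {p. graph_perm n E p \<and> card {i. p i \<noteq> i} = r}"
    by (auto simp: graph_perm_def)
  finally show ?thesis by (simp add: sum_distrib_left mult_ac)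
qed

lemma sign_cycle_of_list:
  "distinct cs \<Longrightarrow> sign (cycle_of_list cs) = (-1) ^ (length cs - 1)"
proof (induction cs rule: cycle_of_list.induct)
  case (1 i j cs)
  have "sign (cycle_of_list (i # j # cs)) = sign (transpose i j) * sign (cycle_of_list (j # cs))"
    by (simp add: sign_compose permutation_swap_id permutation_of_cycle)
  also have "\<dots> = (-1) ^ (length (i # j # cs) - 1)" using 1 by (simp add: sign_swap_id)
  finally show ?case .
qed simp_all

locale hub_cycle = unicyclic_graph +
  fixes k :: nat and c :: "nat \<Rightarrow> nat"
  assumes cycle: "is_cycle E k c"
    and deg_cycle: "\<forall>i. 1 \<le> i \<and> i \<le> k - 1 \<longrightarrow> deg E (c i) = 2"
begin

abbreviation cycle_vertices :: "nat set" where
  "cycle_vertices \<equiv> c ` {..<k}"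

definition outer_edges :: "nat set set" where
  "outer_edges = {e \<in> edges E. e \<inter> cycle_vertices = {}}"

definition rotation :: "nat \<Rightarrow> nat" where
  "rotation = cycle_of_list (map c [0..<k])"

definition cycle_matching_perm :: "nat set set \<Rightarrow> nat \<Rightarrow> nat" where
  "cycle_matching_perm S = rotation \<circ> matching_perm S"

lemma three_le_k: "3 \<le> k"
  using cycle by (simp add: is_cycle_def)

lemma c_eq_iff: "i < k \<Longrightarrow> j < k \<Longrightarrow> c i = c j \<longleftrightarrow> i = j"
  using cycle by (auto simp: is_cycle_def dest: inj_onD)

lemma E_sym: "E a b \<Longrightarrow> E b a"
  using simple by (simp add: simple_graph_def)

lemma edge_cycle: "j < k \<Longrightarrow> E (c j) (c (Suc j mod k))"
  using cycle by (simp add: is_cycle_def)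

lemma edge_c1_c0: "E (c 1) (c 0)"
  using edge_cycle[of 0] three_le_k by (simp add: E_sym)

lemma cycle_path: "(c 1, c 0) \<in> {(u, v). delete_edge E (c 1) (c 0) u v}\<^sup>*"
proof -
  let ?D = "{(u, v). delete_edge E (c 1) (c 0) u v}"
  have cycle_step: "(c j, c (Suc j mod k)) \<in> ?D" if j: "1 \<le> j" "j < k" for j
  proof -
    have "c j \<noteq> c 0" using j c_eq_iff[of j 0] by simp
    moreover have "c (Suc j mod k) \<noteq> c 0" if "j = 1"
      using that three_le_k c_eq_iff[of "Suc (Suc 0)" 0] by simp
    ultimately have "{c j, c (Suc j mod k)} \<noteq> {c 1, c 0}"
      using j c_eq_iff[of j 1] by (auto simp: doubleton_eq_iff)
    then show ?thesis using edge_cycle[OF j(2)] by (simp add: delete_edge_def)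
  qed
  have walk: "(c 1, c j) \<in> ?D\<^sup>*" if "1 \<le> j" "j < k" for j
    using that
  proof (induction j rule: dec_induct)
    case (step j)
    then have "(c j, c (Suc j)) \<in> ?D" using cycle_step[of j] by simp
    with step show ?case by (simp add: rtrancl_into_rtrancl)
  qed simp
  have "(c 1, c (k - 1)) \<in> ?D\<^sup>*" using walk[of "k - 1"] three_le_k by simp
  moreover have "(c (k - 1), c 0) \<in> ?D" using cycle_step[of "k - 1"] three_le_k by simp
  ultimately show ?thesis by (rule rtrancl_into_rtrancl)
qed

lemma neighbours_cycle:
  assumes j: "1 \<le> j" "j < k"
  shows "{b. E (c j) b} = {c (j - 1), c (Suc j mod k)}"
proof -
  have "card {b. E (c j) b} = 2" using deg_cycle j by (simp add: deg_def)
  then have "finite {b. E (c j) b}" by (intro card_ge_0_finite) simp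
  moreover have "E (c j) (c (j - 1))" using edge_cycle[of "j - 1"] j by (simp add: E_sym)
  moreover have "E (c j) (c (Suc j mod k))" using edge_cycle[OF j(2)] .
  moreover have "c (j - 1) \<noteq> c (Suc j mod k)"
  proof (cases "Suc j < k")
    case True
    then show ?thesis using j c_eq_iff[of "j - 1" "Suc j"] by simp
  next
    case False
    then have "Suc j = k" using j by simp
    moreover from this have "Suc j mod k = 0" by simp
    ultimately show ?thesis using j three_le_k c_eq_iff[of "j - 1" 0] by simp
  qed
  ultimately show ?thesis
    using \<open>card {b. E (c j) b} = 2\<close> by (intro card_subset_eq[symmetric]) auto
qed

lemma rotation_c: "j < k \<Longrightarrow> rotation (c j) = c (Suc j mod k)"
proof -
  assume j: "j < k"
  have "distinct (map c [0..<k])"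
    using cycle by (simp add: is_cycle_def distinct_map atLeast0LessThan)
  from cyclic_rotation[OF this, of 1] have "map rotation (map c [0..<k]) = rotate1 (map c [0..<k])"
    by (simp add: rotation_def)
  then have "map rotation (map c [0..<k]) ! j = rotate1 (map c [0..<k]) ! j" by simp
  then show ?thesis using j by (simp add: nth_rotate1)
qed

lemma rotation_permutes: "rotation permutes cycle_vertices"
  using cycle_permutes[of "map c [0..<k]"] by (simp add: rotation_def atLeast0LessThan)

lemma sign_rotation: "odd k \<Longrightarrow> sign rotation = 1"
proof -
  assume "odd k"
  have "distinct (map c [0..<k])"
    using cycle by (simp add: is_cycle_def distinct_map atLeast0LessThan)
  then show ?thesis using \<open>odd k\<close> three_le_k by (simp add: rotation_def sign_cycle_of_list)
qed

lemma finite_outer_edges: "finite outer_edges"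
  using finite_edges[OF simple] by (simp add: outer_edges_def)

lemma matchings_outer_edges:
  "matchings outer_edges t = {S. S \<subseteq> outer_edges \<and> matching S \<and> card S = t}"
proof -
  have "card e = 2" if "e \<in> outer_edges" for e
    using that card_edge[OF simple] by (simp add: outer_edges_def)
  then show ?thesis
    by (auto simp: matchings_def matching_def pairwise_def disjnt_def)
qed

lemma cycle_vertices_subset: "cycle_vertices \<subseteq> {0..<n}"
proof
  fix x assume "x \<in> cycle_vertices"
  then obtain j where "j < k" "x = c j" by blast
  then show "x \<in> {0..<n}" using edge_cycle[of j] simple by (auto simp: simple_graph_def)
qed

lemma rotation_moves: "j < k \<Longrightarrow> c (Suc j mod k) \<noteq> c j"
  using three_le_k c_eq_iff[of "Suc j mod k" j] by (cases "Suc j < k") (auto simp: mod_if)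

lemma finite_outer_matching: "S \<subseteq> outer_edges \<Longrightarrow> finite S"
  using finite_outer_edges finite_subset by blast

lemma outer_matching_vertices:
  assumes "S \<subseteq> outer_edges"
  shows "\<Union>S \<subseteq> {0..<n} - cycle_vertices"
proof
  fix x assume "x \<in> \<Union>S"
  then obtain e where "e \<in> outer_edges" "x \<in> e" using assms by blast
  then obtain a b where "E a b" "x \<in> {a, b}" "{a, b} \<inter> cycle_vertices = {}"
    by (auto simp: outer_edges_def edges_def)
  then show "x \<in> {0..<n} - cycle_vertices" using simple by (auto simp: simple_graph_def)
qed

lemma cycle_matching_perm_cycle:
  assumes "S \<subseteq> outer_edges" "j < k"
  shows "cycle_matching_perm S (c j) = c (Suc j mod k)"
proof -
  have "c j \<notin> \<Union>S" using outer_matching_vertices[OF assms(1)] assms(2) by auto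
  then show ?thesis using rotation_c[OF assms(2)] by (simp add: cycle_matching_perm_def matching_perm_outside)
qed

lemma cycle_matching_perm_outer:
  assumes S: "S \<subseteq> outer_edges" "matching S" and x: "x \<notin> cycle_vertices"
  shows "cycle_matching_perm S x = matching_perm S x"
proof -
  have "matching_perm S x \<notin> cycle_vertices"
  proof (cases "x \<in> \<Union>S")
    case True
    then have "matching_perm S x \<in> \<Union>S" using matching_perm_edge(1)[OF S(2)] by blast
    then show ?thesis using outer_matching_vertices[OF S(1)] by blast
  qed (simp add: matching_perm_outside x)
  then show ?thesis using rotation_permutes by (simp add: cycle_matching_perm_def permutes_not_in)
qed

lemma cycle_matching_perm_permutes:
  assumes S: "S \<subseteq> outer_edges" "matching S"
  shows "cycle_matching_perm S permutes {0..<n}"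
proof -
  have "matching_perm S permutes \<Union>S"
    using matching_perm_permutes_sign[OF finite_outer_matching[OF S(1)] S(2)] by blast
  moreover have "\<Union>S \<subseteq> {0..<n}" using outer_matching_vertices[OF S(1)] by blast
  ultimately have "matching_perm S permutes {0..<n}" by (rule permutes_subset)
  moreover have "rotation permutes {0..<n}"
    using rotation_permutes cycle_vertices_subset by (rule permutes_subset)
  ultimately show ?thesis unfolding cycle_matching_perm_def by (rule permutes_compose)
qed

lemma moved_cycle_matching_perm:
  assumes S: "S \<subseteq> outer_edges" "matching S"
  shows "{x. cycle_matching_perm S x \<noteq> x} = cycle_vertices \<union> \<Union>S"
proof -
  have "cycle_matching_perm S x \<noteq> x \<longleftrightarrow> x \<in> cycle_vertices \<union> \<Union>S" for x
  proof (cases "x \<in> cycle_vertices")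
    case True
    then show ?thesis using cycle_matching_perm_cycle[OF S(1)] rotation_moves by auto
  next
    case False
    have "matching_perm S x \<noteq> x \<longleftrightarrow> x \<in> \<Union>S"
      using matching_perm_edge(2)[OF S(2)] matching_perm_outside[of x S] by blast
    then show ?thesis using cycle_matching_perm_outer[OF S False] False by simp
  qed
  then show ?thesis by blast
qed

lemma card_moved_cycle_matching_perm:
  assumes S: "S \<subseteq> outer_edges" "matching S"
  shows "card {x. cycle_matching_perm S x \<noteq> x} = k + 2 * card S"
proof -
  have "card cycle_vertices = k"
    using cycle by (simp add: is_cycle_def card_image)
  moreover have "card (\<Union>S) = 2 * card S"
    using card_Union_matching[OF finite_outer_matching[OF S(1)] S(2)] .
  moreover have "finite (\<Union>S)" using outer_matching_vertices[OF S(1)] finite_subset by blast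
  moreover have "cycle_vertices \<inter> \<Union>S = {}" using outer_matching_vertices[OF S(1)] by blast
  ultimately show ?thesis by (simp add: moved_cycle_matching_perm[OF S] card_Un_disjoint)
qed

lemma graph_perm_cycle_matching_perm:
  assumes S: "S \<subseteq> outer_edges" "matching S"
  shows "graph_perm n E (cycle_matching_perm S)"
proof -
  have "E x (cycle_matching_perm S x)" if "cycle_matching_perm S x \<noteq> x" for x
  proof (cases "x \<in> cycle_vertices")
    case True
    then show ?thesis using cycle_matching_perm_cycle[OF S(1)] edge_cycle by auto
  next
    case False
    then have "x \<in> \<Union>S" using that moved_cycle_matching_perm[OF S] by blast
    then have "{x, cycle_matching_perm S x} \<in> edges E"
      using matching_perm_edge(1)[OF S(2)] cycle_matching_perm_outer[OF S False] S(1)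
      by (auto simp: outer_edges_def)
    then show ?thesis using E_sym by (auto simp: edges_def doubleton_eq_iff)
  qed
  then show ?thesis using cycle_matching_perm_permutes[OF S] by (simp add: graph_perm_def)
qed

lemma sign_cycle_matching_perm:
  assumes "odd k" and S: "S \<subseteq> outer_edges" "matching S"
  shows "sign (cycle_matching_perm S) = (-1) ^ card S"
proof -
  have "matching_perm S permutes \<Union>S" "sign (matching_perm S) = (-1) ^ card S"
    using matching_perm_permutes_sign[OF finite_outer_matching[OF S(1)] S(2)] by auto
  moreover have "finite (\<Union>S)" using outer_matching_vertices[OF S(1)] finite_subset by blast
  moreover have "permutation rotation"
    using permutes_imp_permutation[OF _ rotation_permutes] by simp
  ultimately show ?thesis
    using sign_rotation[OF \<open>odd k\<close>] unfolding cycle_matching_perm_def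
    by (simp add: sign_compose permutes_imp_permutation)
qed

lemma cycle_weight:
  "(\<Prod>i\<in>cycle_vertices. 1 / real (deg E i)) = 1 / (real (deg E (c 0)) * 2 ^ (k - 1))"
proof -
  have "inj_on c {..<k}" using cycle by (simp add: is_cycle_def)
  then have "(\<Prod>i\<in>cycle_vertices. 1 / real (deg E i)) = (\<Prod>j<k. 1 / real (deg E (c j)))"
    by (simp add: prod.reindex)
  also have "\<dots> = 1 / real (deg E (c 0)) * (\<Prod>j\<in>{1..<k}. 1 / real (deg E (c j)))"
  proof -
    have "{..<k} = insert 0 {1..<k}" using three_le_k by auto
    then show ?thesis by simp
  qed
  also have "(\<Prod>j\<in>{1..<k}. 1 / real (deg E (c j))) = (\<Prod>j\<in>{1..<k}. 1 / 2)"
    using deg_cycle by (intro prod.cong) auto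
  finally show ?thesis by (simp add: power_one_over)
qed

lemma cycle_matching_perm_weight:
  assumes S: "S \<subseteq> outer_edges" "matching S"
  shows "(\<Prod>i | cycle_matching_perm S i \<noteq> i. 1 / real (deg E i)) =
    (\<Prod>i\<in>cycle_vertices. 1 / real (deg E i)) * (\<Prod>e\<in>S. Mw E e)"
proof -
  have fin: "\<forall>e\<in>S. finite e" using S(2) by (auto simp: matching_def card_2_iff)
  have disj: "\<forall>e\<in>S. \<forall>e'\<in>S. e \<noteq> e' \<longrightarrow> e \<inter> e' = {}"
    using S(2) unfolding matching_def pairwise_def disjnt_def by blast
  have "(\<Prod>i\<in>\<Union>S. 1 / real (deg E i)) = (\<Prod>e\<in>S. Mw E e)"
    unfolding Mw_def using prod.Union_disjoint[OF fin disj] by simp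
  moreover have "(\<Prod>i\<in>cycle_vertices \<union> \<Union>S. 1 / real (deg E i)) =
      (\<Prod>i\<in>cycle_vertices. 1 / real (deg E i)) * (\<Prod>i\<in>\<Union>S. 1 / real (deg E i))"
  proof (rule prod.union_disjoint)
    show "finite (\<Union>S)" using outer_matching_vertices[OF S(1)] finite_subset by blast
    show "cycle_vertices \<inter> \<Union>S = {}" using outer_matching_vertices[OF S(1)] by blast
  qed simp
  ultimately show ?thesis by (simp add: moved_cycle_matching_perm[OF S])
qed

lemma matching_eq_cycle_matching_perm_pairs:
  assumes S: "S \<subseteq> outer_edges" "matching S"
  shows "S = (\<lambda>x. {x, cycle_matching_perm S x}) ` ({x. cycle_matching_perm S x \<noteq> x} - cycle_vertices)"
proof -
  have moved: "{x. cycle_matching_perm S x \<noteq> x} - cycle_vertices = \<Union>S"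
    using moved_cycle_matching_perm[OF S] outer_matching_vertices[OF S(1)] by blast
  have "(\<lambda>x. {x, cycle_matching_perm S x}) ` \<Union>S = (\<lambda>x. {x, matching_perm S x}) ` \<Union>S"
  proof (rule image_cong[OF refl])
    fix x assume "x \<in> \<Union>S"
    then have "x \<notin> cycle_vertices" using outer_matching_vertices[OF S(1)] by blast
    then show "{x, cycle_matching_perm S x} = {x, matching_perm S x}" using cycle_matching_perm_outer[OF S] by simp
  qed
  also have "\<dots> = S"
  proof
    show "(\<lambda>x. {x, matching_perm S x}) ` \<Union>S \<subseteq> S"
      using matching_perm_edge(1)[OF S(2)] by blast
    show "S \<subseteq> (\<lambda>x. {x, matching_perm S x}) ` \<Union>S"
    proof
      fix e assume e: "e \<in> S"
      then obtain a b where ab: "e = {a, b}" "a \<noteq> b" using S(2) by (auto simp: matching_def card_2_iff)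
      then have "e = {a, matching_perm S a}" using matching_perm_eq[OF S(2), of a b] e by simp
      moreover have "a \<in> \<Union>S" using e ab by blast
      ultimately show "e \<in> (\<lambda>x. {x, matching_perm S x}) ` \<Union>S" by (rule image_eqI)
    qed
  qed
  finally show ?thesis unfolding moved by (rule sym)
qed

lemma cycle_matching_perm_neq_inv:
  assumes "S \<subseteq> outer_edges" "S' \<subseteq> outer_edges" "matching S'"
  shows "cycle_matching_perm S \<noteq> inv_into UNIV (cycle_matching_perm S')"
proof
  assume eq: "cycle_matching_perm S = inv_into UNIV (cycle_matching_perm S')"
  have "cycle_matching_perm S' (c (k - 1)) = c 0"
    using cycle_matching_perm_cycle[OF assms(2), of "k - 1"] three_le_k by simp
  then have "inv_into UNIV (cycle_matching_perm S') (c 0) = c (k - 1)"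
    using permutes_inv_eq[OF cycle_matching_perm_permutes[OF assms(2,3)]] by simp
  moreover have "cycle_matching_perm S (c 0) = c 1"
    using cycle_matching_perm_cycle[OF assms(1), of 0] three_le_k by simp
  ultimately show False using eq c_eq_iff[of 1 "k - 1"] three_le_k by simp
qed

lemma graph_perm_rotates_cycle:
  assumes p: "graph_perm n E p" and start: "p (c 0) = c 1" "p (c 1) \<noteq> c 0"
  shows "j < k \<Longrightarrow> p (c j) = c (Suc j mod k)"
proof (induction j rule: less_induct)
  case (less j)
  have inj: "inj p" using p by (auto simp: graph_perm_def permutes_inj)
  show ?case
  proof (cases j)
    case 0
    then show ?thesis using start(1) three_le_k by simp
  next
    case (Suc i)
    have prev: "p (c i) = c j" using less.IH[of i] Suc less.prems by simp
    have "p (c j) \<noteq> c j"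
    proof
      assume "p (c j) = c j"
      then have "p (c i) = p (c j)" using prev by simp
      then have "c i = c j" using inj by (simp add: inj_eq)
      then show False using c_eq_iff[of i j] Suc less.prems by simp
    qed
    then have "p (c j) \<in> {c i, c (Suc j mod k)}"
      using p neighbours_cycle[of j] Suc less.prems by (auto simp: graph_perm_def)
    moreover have "p (c j) \<noteq> c i"
    proof (cases i)
      case 0
      then show ?thesis using start(2) Suc by simp
    next
      case (Suc i')
      then have "p (c i') = c i" using less.IH[of i'] \<open>j = Suc i\<close> less.prems by simp
      show ?thesis
      proof
        assume "p (c j) = c i"
        then have "p (c j) = p (c i')" using \<open>p (c i') = c i\<close> by simp
        then have "c j = c i'" using inj by (simp add: inj_eq)
        then show False using c_eq_iff[of j i'] \<open>j = Suc i\<close> \<open>i = Suc i'\<close> less.prems by simp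
      qed
    qed
    ultimately show ?thesis by simp
  qed
qed

lemma rotating_perm_off_cycle:
  assumes inj: "inj p" and rot: "\<forall>j<k. p (c j) = c (Suc j mod k)" and x: "x \<notin> cycle_vertices"
  shows "p x \<notin> cycle_vertices"
proof
  assume "p x \<in> cycle_vertices"
  then obtain i where i: "i < k" "p x = c i" by blast
  define j where "j = (i + (k - 1)) mod k"
  have "j < k" "Suc j mod k = i"
    using i three_le_k by (simp_all add: j_def mod_Suc_eq)
  then have "p (c j) = p x" using rot i by simp
  then have "x = c j" using inj by (auto dest: injD)
  with x \<open>j < k\<close> show False by blast
qed

lemma rotating_graph_perm_involutive_off_cycle:
  assumes p: "graph_perm n E p" and rot: "\<forall>j<k. p (c j) = c (Suc j mod k)"
    and x: "x \<notin> cycle_vertices"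
  shows "p (p x) = x"
proof (rule ccontr)
  assume "p (p x) \<noteq> x"
  with graph_perm_orbit_crosses_cycle_edge[OF edge_c1_c0 cycle_path p]
  obtain m where "{(p ^^ m) x, (p ^^ Suc m) x} = {c 1, c 0}" by blast
  then have "(p ^^ m) x \<in> cycle_vertices" using three_le_k by (auto simp: doubleton_eq_iff)
  moreover have "inj p" using p permutes_inj by (auto simp: graph_perm_def)
  then have "(p ^^ j) x \<notin> cycle_vertices" for j
    by (induction j) (simp_all add: x rotating_perm_off_cycle[OF _ rot])
  ultimately show False by blast
qed

lemma rotating_graph_perm_eq_cycle_matching_perm:
  assumes p: "graph_perm n E p" and rot: "\<forall>j<k. p (c j) = c (Suc j mod k)"
  obtains S where "S \<subseteq> outer_edges" "matching S" "p = cycle_matching_perm S"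
proof -
  have inj: "inj p" using p permutes_inj by (auto simp: graph_perm_def)
  define R where "R = {x. p x \<noteq> x} - cycle_vertices"
  have R: "\<forall>x\<in>R. p x \<in> R \<and> p x \<noteq> x \<and> p (p x) = x"
  proof
    fix x assume "x \<in> R"
    then have x: "p x \<noteq> x" "x \<notin> cycle_vertices" unfolding R_def by blast+
    have "p (p x) = x" by (rule rotating_graph_perm_involutive_off_cycle[OF p rot x(2)])
    moreover have "p x \<notin> cycle_vertices" by (rule rotating_perm_off_cycle[OF inj rot x(2)])
    ultimately show "p x \<in> R \<and> p x \<noteq> x \<and> p (p x) = x" using x(1) unfolding R_def by simp
  qed
  define S where "S = (\<lambda>x. {x, p x}) ` R"
  have S: "matching S" "\<Union>S = R" unfolding S_def by (rule matching_of_involution[OF R])+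
  have "S \<subseteq> outer_edges"
  proof
    fix e assume "e \<in> S"
    then obtain x where x: "x \<in> R" "e = {x, p x}" by (auto simp: S_def)
    then have "E x (p x)" using p by (auto simp: graph_perm_def R_def)
    moreover have "x \<notin> cycle_vertices" "p x \<notin> cycle_vertices"
      using x(1) R unfolding R_def by blast+
    ultimately show "e \<in> outer_edges" using x by (simp add: outer_edges_def edgesI)
  qed
  moreover have "p x = cycle_matching_perm S x" for x
  proof (cases "x \<in> cycle_vertices")
    case True
    then show ?thesis using rot cycle_matching_perm_cycle[OF \<open>S \<subseteq> outer_edges\<close>] by auto
  next
    case False
    have "matching_perm S x = (if x \<in> R then p x else x)"
      using matching_perm_of_involution[OF R] matching_perm_outside[of x S] S(2)
      unfolding S_def by auto
    then show ?thesis
      using cycle_matching_perm_outer[OF \<open>S \<subseteq> outer_edges\<close> S(1) False] False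
      by (auto simp: R_def)
  qed
  ultimately show thesis using that S(1) by blast
qed

lemma odd_graph_perm_cases:
  assumes p: "graph_perm n E p" and odd: "odd (card {x. p x \<noteq> x})"
  obtains S where "S \<subseteq> outer_edges" "matching S"
    "p = cycle_matching_perm S \<or> p = inv_into UNIV (cycle_matching_perm S)"
proof -
  have perm: "p permutes {0..<n}" using p by (simp add: graph_perm_def)
  have "finite {x. p x \<noteq> x}"
    using perm finite_subset[of _ "{0..<n}"] by (simp add: permutes_altdef)
  then obtain x where x: "p (p x) \<noteq> x" using odd by (rule odd_card_moved_imp_not_involution)
  with graph_perm_orbit_crosses_cycle_edge[OF edge_c1_c0 cycle_path p]
  obtain m where m: "{(p ^^ m) x, (p ^^ Suc m) x} = {c 1, c 0}" by blast
  define y where "y = (p ^^ m) x"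
  have y: "p (p y) \<noteq> y"
    using funpow_orbit_moved[OF permutes_inj[OF perm], of 2 x m] x by (simp add: y_def numeral_2_eq_2)
  have "{y, p y} = {c 1, c 0}" using m by (simp add: y_def)
  then consider "y = c 0" "p y = c 1" | "y = c 1" "p y = c 0" by (auto simp: doubleton_eq_iff)
  then show thesis
  proof cases
    case 1
    then have "p (c 0) = c 1" "p (c 1) \<noteq> c 0" using y by auto
    then have "\<forall>j<k. p (c j) = c (Suc j mod k)" using graph_perm_rotates_cycle[OF p] by blast
    then obtain S where "S \<subseteq> outer_edges" "matching S" "p = cycle_matching_perm S"
      by (rule rotating_graph_perm_eq_cycle_matching_perm[OF p])
    then show thesis using that by blast
  next
    case 2
    have q: "graph_perm n E (inv_into UNIV p)" using graph_perm_inv(1)[OF simple p] .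
    have "inv_into UNIV p (c 0) = c 1" "inv_into UNIV p (c 1) \<noteq> c 0"
      using 2 y permutes_inv_eq[OF perm] by auto
    then have "\<forall>j<k. inv_into UNIV p (c j) = c (Suc j mod k)"
      using graph_perm_rotates_cycle[OF q] by blast
    then obtain S where S: "S \<subseteq> outer_edges" "matching S" "inv_into UNIV p = cycle_matching_perm S"
      by (rule rotating_graph_perm_eq_cycle_matching_perm[OF q])
    have "p = inv_into UNIV (cycle_matching_perm S)"
      unfolding S(3)[symmetric] using permutes_bij[OF perm] by (simp add: inv_inv_eq)
    then show thesis using that S by blast
  qed
qed

lemma graph_perms_card_moved:
  assumes "odd k"
  shows "{p. graph_perm n E p \<and> card {x. p x \<noteq> x} = k + 2 * t} =
    cycle_matching_perm ` matchings outer_edges t \<union> (\<lambda>S. inv_into UNIV (cycle_matching_perm S)) ` matchings outer_edges t"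
    (is "?Good = ?F \<union> ?I")
proof
  have moved_inv: "{x. inv_into UNIV (cycle_matching_perm S) x \<noteq> x} = {x. cycle_matching_perm S x \<noteq> x}"
    if "S \<subseteq> outer_edges" "matching S" for S
    using graph_perm_inv(2)[OF simple graph_perm_cycle_matching_perm[OF that]] .
  show "?Good \<subseteq> ?F \<union> ?I"
  proof
    fix p assume "p \<in> ?Good"
    then have p: "graph_perm n E p" and card: "card {x. p x \<noteq> x} = k + 2 * t" by auto
    then have "odd (card {x. p x \<noteq> x})" using \<open>odd k\<close> by simp
    then obtain S where S: "S \<subseteq> outer_edges" "matching S" "p = cycle_matching_perm S \<or> p = inv_into UNIV (cycle_matching_perm S)"
      using odd_graph_perm_cases[OF p] by blast
    then have "card {x. p x \<noteq> x} = k + 2 * card S"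
      using card_moved_cycle_matching_perm[OF S(1,2)] moved_inv[OF S(1,2)] by auto
    then have "S \<in> matchings outer_edges t" using card S by (simp add: matchings_outer_edges)
    then show "p \<in> ?F \<union> ?I" using S(3) by blast
  qed
  show "?F \<union> ?I \<subseteq> ?Good"
  proof
    fix p assume "p \<in> ?F \<union> ?I"
    then obtain S where S: "S \<subseteq> outer_edges" "matching S" "card S = t"
      and p: "p = cycle_matching_perm S \<or> p = inv_into UNIV (cycle_matching_perm S)"
      by (auto simp: matchings_outer_edges)
    have "graph_perm n E (inv_into UNIV (cycle_matching_perm S))"
      using graph_perm_inv(1)[OF simple graph_perm_cycle_matching_perm[OF S(1,2)]] .
    then show "p \<in> ?Good"
      using p graph_perm_cycle_matching_perm[OF S(1,2)] card_moved_cycle_matching_perm[OF S(1,2)] moved_inv[OF S(1,2)] S(3)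
      by auto
  qed
qed

lemma card_outer_matching_le:
  assumes S: "S \<subseteq> outer_edges" "matching S"
  shows "k + 2 * card S \<le> n"
proof -
  have "{x. cycle_matching_perm S x \<noteq> x} \<subseteq> {0..<n}"
    using cycle_matching_perm_permutes[OF S] by (simp add: permutes_altdef)
  then have "card {x. cycle_matching_perm S x \<noteq> x} \<le> n" using card_mono[of "{0..<n}"] by fastforce
  then show ?thesis using card_moved_cycle_matching_perm[OF S] by simp
qed

lemma signed_weight_cycle_matching_perm:
  assumes "odd k" and S: "S \<subseteq> outer_edges" "matching S"
    and p: "p = cycle_matching_perm S \<or> p = inv_into UNIV (cycle_matching_perm S)"
  shows "of_int (sign p) * (\<Prod>i | p i \<noteq> i. 1 / real (deg E i)) =
    (-1) ^ card S * (\<Prod>i\<in>cycle_vertices. 1 / real (deg E i)) * (\<Prod>e\<in>S. Mw E e)"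
proof -
  have "permutation (cycle_matching_perm S)"
    using permutes_imp_permutation[OF _ cycle_matching_perm_permutes[OF S]] by simp
  then have "sign p = sign (cycle_matching_perm S)" using p by (auto simp: sign_inverse)
  moreover have "{i. p i \<noteq> i} = {i. cycle_matching_perm S i \<noteq> i}"
    using p graph_perm_inv(2)[OF simple graph_perm_cycle_matching_perm[OF S]] by auto
  ultimately show ?thesis
    using sign_cycle_matching_perm[OF \<open>odd k\<close> S] cycle_matching_perm_weight[OF S] by simp
qed

lemma inj_on_cycle_matching_perm:
  "inj_on cycle_matching_perm {S. S \<subseteq> outer_edges \<and> matching S}"
proof (rule inj_onI)
  fix S S' assume S: "S \<in> {S. S \<subseteq> outer_edges \<and> matching S}" "S' \<in> {S. S \<subseteq> outer_edges \<and> matching S}"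
    and eq: "cycle_matching_perm S = cycle_matching_perm S'"
  have "S = (\<lambda>x. {x, cycle_matching_perm S x}) ` ({x. cycle_matching_perm S x \<noteq> x} - cycle_vertices)"
    using S(1) by (intro matching_eq_cycle_matching_perm_pairs) auto
  also have "\<dots> = S'"
    unfolding eq using S(2) by (intro matching_eq_cycle_matching_perm_pairs[symmetric]) auto
  finally show "S = S'" .
qed

lemma inj_on_inv_cycle_matching_perm:
  "inj_on (\<lambda>S. inv_into UNIV (cycle_matching_perm S)) {S. S \<subseteq> outer_edges \<and> matching S}"
proof (rule inj_onI)
  fix S S' assume S: "S \<in> {S. S \<subseteq> outer_edges \<and> matching S}" "S' \<in> {S. S \<subseteq> outer_edges \<and> matching S}"
    and eq: "inv_into UNIV (cycle_matching_perm S) = inv_into UNIV (cycle_matching_perm S')"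
  have "bij (cycle_matching_perm S)" "bij (cycle_matching_perm S')"
    using cycle_matching_perm_permutes S permutes_bij by blast+
  then have "cycle_matching_perm S = cycle_matching_perm S'" using eq by (metis inv_inv_eq)
  then show "S = S'" using inj_on_cycle_matching_perm S by (auto dest: inj_onD)
qed

lemma sum_signed_weight_graph_perms:
  assumes "odd k"
  shows "(\<Sum>p | graph_perm n E p \<and> card {i. p i \<noteq> i} = k + 2 * t.
      of_int (sign p) * (\<Prod>i | p i \<noteq> i. 1 / real (deg E i))) =
    2 * ((-1) ^ t * (\<Prod>i\<in>cycle_vertices. 1 / real (deg E i)) *
      (\<Sum>S\<in>matchings outer_edges t. \<Prod>e\<in>S. Mw E e))"
proof -
  let ?M = "matchings outer_edges t"
  let ?w = "\<lambda>p. of_int (sign p) * (\<Prod>i | p i \<noteq> i. 1 / real (deg E i)) :: real"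
  let ?inv = "\<lambda>S. inv_into UNIV (cycle_matching_perm S)"
  define X where "X S = (-1) ^ t * (\<Prod>i\<in>cycle_vertices. 1 / real (deg E i)) * (\<Prod>e\<in>S. Mw E e)" for S
  have M: "?M \<subseteq> {S. S \<subseteq> outer_edges \<and> matching S}" by (auto simp: matchings_outer_edges)
  have w: "?w (cycle_matching_perm S) = X S" "?w (?inv S) = X S" if "S \<in> ?M" for S
    using signed_weight_cycle_matching_perm[OF \<open>odd k\<close>] that
    by (auto simp: X_def matchings_outer_edges)
  have "?M \<subseteq> Pow outer_edges" by (auto simp: matchings_def)
  then have "finite ?M" using finite_outer_edges by (simp add: finite_subset)
  moreover have "cycle_matching_perm ` ?M \<inter> ?inv ` ?M = {}"
    using cycle_matching_perm_neq_inv by (auto simp: matchings_outer_edges)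
  ultimately have "(\<Sum>p\<in>cycle_matching_perm ` ?M \<union> ?inv ` ?M. ?w p) =
      (\<Sum>p\<in>cycle_matching_perm ` ?M. ?w p) + (\<Sum>p\<in>?inv ` ?M. ?w p)"
    by (intro sum.union_disjoint) auto
  also have "(\<Sum>p\<in>cycle_matching_perm ` ?M. ?w p) = (\<Sum>S\<in>?M. ?w (cycle_matching_perm S))"
    by (simp add: sum.reindex[OF inj_on_subset[OF inj_on_cycle_matching_perm M]])
  also have "(\<Sum>p\<in>?inv ` ?M. ?w p) = (\<Sum>S\<in>?M. ?w (?inv S))"
    by (simp add: sum.reindex[OF inj_on_subset[OF inj_on_inv_cycle_matching_perm M]])
  also have "(\<Sum>S\<in>?M. ?w (cycle_matching_perm S)) = (\<Sum>S\<in>?M. X S)"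
    by (intro sum.cong refl w(1))
  also have "(\<Sum>S\<in>?M. ?w (?inv S)) = (\<Sum>S\<in>?M. X S)"
    by (intro sum.cong refl w(2))
  finally show ?thesis
    unfolding graph_perms_card_moved[OF \<open>odd k\<close>] by (simp add: X_def sum_distrib_left)
qed

lemma coeff_char_poly_transition_matrix_matchings:
  assumes "odd k" and "k + 2 * t \<le> n"
  shows "coeff (char_poly (transition_matrix n E)) (n - (k + 2 * t)) =
    (-1) ^ Suc t * 2 * (\<Prod>i\<in>cycle_vertices. 1 / real (deg E i)) *
      (\<Sum>S\<in>matchings outer_edges t. \<Prod>e\<in>S. Mw E e)"
proof -
  have "(-1 :: real) ^ (k + 2 * t) = -1" using \<open>odd k\<close> by simp
  then show ?thesis
    using coeff_char_poly_transition_matrix[OF simple assms(2)] sum_signed_weight_graph_perms[OF \<open>odd k\<close>]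
    by simp
qed

lemma scaled_coeff_char_poly_transition_matrix:
  assumes "odd k" and "k + 2 * t \<le> n" and "deg E (c 0) = 4"
  shows "2 ^ (k + 2 * t) * coeff (char_poly (transition_matrix n E)) (n - k - 2 * t) =
    (-1) ^ Suc t * (2 ^ (2 * t) * (\<Sum>S\<in>matchings outer_edges t. \<Prod>e\<in>S. Mw E e))"
proof -
  let ?W = "\<Prod>i\<in>cycle_vertices. 1 / real (deg E i)"
  let ?X = "\<Sum>S\<in>matchings outer_edges t. \<Prod>e\<in>S. Mw E e"
  obtain k' where k: "k = Suc k'" using three_le_k by (cases k) auto
  have scale: "2 ^ (k + 2 * t) * (2 * ?W) = 2 ^ (2 * t)"
    using cycle_weight assms(3) by (simp add: k power_add)
  have "2 ^ (k + 2 * t) * coeff (char_poly (transition_matrix n E)) (n - k - 2 * t) =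
      2 ^ (k + 2 * t) * ((-1) ^ Suc t * 2 * ?W * ?X)"
    using coeff_char_poly_transition_matrix_matchings[OF assms(1,2)] by simp
  also have "\<dots> = (-1) ^ Suc t * ((2 ^ (k + 2 * t) * (2 * ?W)) * ?X)" by (simp only: mult_ac)
  finally show ?thesis unfolding scale .
qed

end

theorem lemma3p3:
  fixes n k t :: nat and E :: "nat \<Rightarrow> nat \<Rightarrow> bool" and c :: "nat \<Rightarrow> nat"
  assumes "odd k" and "3 \<le> k"
    and "odd_unicycle n E"
    and "girth E = k"
    and "is_cycle E k c"
    and "deg E (c 0) = 4"
    and "\<forall>i. 1 \<le> i \<and> i \<le> k - 1 \<longrightarrow> deg E (c i) = 2"
    and "1 \<le> t" and "t \<le> (k - 1) div 2"
    and "2 ^ (k + 2 * t) * coeff (char_poly (transition_matrix n E)) (n - k - 2 * t) \<in> \<int>"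
  shows "2 ^ (2 * t) * (\<Sum>S\<in>matchings {e \<in> edges E. e \<inter> c ` {..<k} = {}} t. \<Prod>e\<in>S. Mw E e) \<in> (\<int> :: real set)"
proof -
  interpret hub_cycle n E k c
    using assms(3,5,7) by unfold_locales (auto simp: odd_unicycle_def)
  let ?X = "\<Sum>S\<in>matchings outer_edges t. \<Prod>e\<in>S. Mw E e"
  have "2 ^ (2 * t) * ?X \<in> (\<int> :: real set)"
  proof (cases "matchings outer_edges t = {}")
    case False
    then have "k + 2 * t \<le> n" using card_outer_matching_le by (auto simp: matchings_outer_edges)
    then have "2 ^ (2 * t) * ?X =
        (-1) ^ Suc t * (2 ^ (k + 2 * t) * coeff (char_poly (transition_matrix n E)) (n - k - 2 * t))"
      using scaled_coeff_char_poly_transition_matrix[OF assms(1) _ assms(6)] by simp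
    then show ?thesis using assms(10) by simp
  qed simp
  then show ?thesis by (simp add: outer_edges_def)
qed

end
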